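(* Let $(\{\boldsymbol\beta^i\}_{i\in I},\{\eta^{i<j}\}_{i<j\in I},z)$ be an $I$-filtered chain complex of attaching circles in $(\Sigma,z)$, and let $\boldsymbol\alpha$ be a further complete set of attaching circles such that for every sequence $i_1<\dots<i_n$ in $I$ the multi-diagram $(\Sigma,\boldsymbol\alpha,\boldsymbol\beta^{i_1},\dots,\boldsymbol\beta^{i_n},z)$ is weakly admissible. For $i<j$ define $D^{i<j}:\widehat{CF}(\boldsymbol\alpha,\boldsymbol\beta^i,z)\to\widehat{CF}(\boldsymbol\alpha,\boldsymbol\beta^j,z)$ by $$D^{i<j}(\mathbf x)=\sum_{i=i_1<\dots<i_n=j} m_n(\eta^{i_{n-1}<i_n},\dots,\eta^{i_1<i_2},\mathbf x).$$ Then $\{\widehat{CF}(\boldsymbol\alpha,\boldsymbol\beta^i,z)\}_{i\in I}$ together with the maps $D^{i<j}$ is an $I$-filtered chain complex, i.e. for all $i<k$, $d(D^{i<k})=\sum_{i<j<k}D^{j<k}\circ D^{i<j}$, where $d$ is the differential on the morphism complex. Its associated graded complex is $\bigoplus_{i\in I}\widehat{CF}(\boldsymbol\alpha,\boldsymbol\beta^i,z)$.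
   Context: Work over $\mathbb F_2$. Let $(\Sigma,z)$ be a closed oriented surface of genus $g$ with basepoint $z$. A complete set of attaching circles is a $g$-tuple of pairwise disjoint, homologically independent embedded circles in $\Sigma\setminus\{z\}$. For complete sets $\boldsymbol\beta^a,\boldsymbol\beta^b$, $\widehat{CF}(\boldsymbol\beta^a,\boldsymbol\beta^b,z)$ is the $\mathbb F_2$-vector space generated by $T_{\boldsymbol\beta^a}\cap T_{\boldsymbol\beta^b}\subset\mathrm{Sym}^g(\Sigma\setminus z)$, where $T_{\boldsymbol\beta}$ is the torus $\beta_1\times\dots\times\beta_g$. For a weakly admissible multi-diagram $(\Sigma,\boldsymbol\beta^0,\dots,\boldsymbol\beta^n,z)$ and a generic admissible family of almost-complex structures, $m_n:\widehat{CF}(\boldsymbol\beta^{n-1},\boldsymbol\beta^n,z)\otimes\dots\otimes\widehat{CF}(\boldsymbol\beta^0,\boldsymbol\beta^1,z)\to\widehat{CF}(\boldsymbol\beta^0,\boldsymbol\beta^n,z)$ counts rigid (expected dimension $0$) embedded holomorphic $(n+1)$-gons with multiplicity $0$ at $z$ (note the order of the inputs); $m_1$ is the differential, and the $m_n$ satisfy the $A_\infty$ relations. For a finite poset $I$, an $I$-filtered chain complex of attaching circles consists of complete sets $\{\boldsymbol\beta^i\}_{i\in I}$ such that each $(\Sigma,\boldsymbol\beta^{i_1},\dots,\boldsymbol\beta^{i_n},z)$, $i_1<\dots<i_n$, is weakly admissible, together with chains $\eta^{i<j}\in\widehat{CF}(\boldsymbol\beta^i,\boldsymbol\beta^j,z)$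 for $i<j$, satisfying for all $i<j$: $\sum_{n\ge1}\sum_{i=i_0<i_1<\dots<i_n=j}m_n(\eta^{i_{n-1}<i_n},\dots,\eta^{i_0<i_1})=0$. An $I$-filtered chain complex is a collection of chain complexes $C^i$ with degree-zero maps $D^{i<j}\in\mathrm{Mor}(C^i,C^j[1])$ satisfying $d(D^{i<k})=\sum_{i<j<k}D^{j<k}\circ D^{i<j}$; equivalently $\sum_i\partial^i+\sum_{i<j}D^{i<j}$ is a differential on $\bigoplus_iC^i$. *)

theory Defs
  imports Main "HOL-Library.Z2" "HOL-Library.Function_Algebras"
begin

text \<open>Chains over F2: functions from generators (intersection points) to bit
  with support in the given generating set.  Objects of type 'o stand for
  complete sets of attaching circles; gens a b is the finite set of generators
  of CF-hat(a,b,z).\<close>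

definition CF :: "('o \<Rightarrow> 'o \<Rightarrow> 'g set) \<Rightarrow> 'o \<Rightarrow> 'o \<Rightarrow> ('g \<Rightarrow> bit) set" where
  "CF gens a b = {x. \<forall>g. x g \<noteq> 0 \<longrightarrow> g \<in> gens a b}"

text \<open>The paper's m_n(x_n,...,x_1) is written here m os [x_1,...,x_n].\<close>

definition composable :: "('o \<Rightarrow> 'o \<Rightarrow> 'g set) \<Rightarrow> 'o list \<Rightarrow> ('g \<Rightarrow> bit) list \<Rightarrow> bool" where
  "composable gens os xs \<longleftrightarrow> xs \<noteq> [] \<and> length os = Suc (length xs) \<and>
     (\<forall>k < length xs. xs ! k \<in> CF gens (os ! k) (os ! Suc k))"

text \<open>Left-hand side of the A-infinity relation (over F2):
  sum over 0 <= p < q <= n of m(x_1..x_p, m(x_(p+1)..x_q), x_(q+1)..x_n).\<close>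

definition ainf_sum :: "('o list \<Rightarrow> ('g \<Rightarrow> bit) list \<Rightarrow> ('g \<Rightarrow> bit)) \<Rightarrow> 'o list \<Rightarrow> ('g \<Rightarrow> bit) list \<Rightarrow> ('g \<Rightarrow> bit)" where
  "ainf_sum m os xs = (\<Sum>(p, q) \<in> {(p, q). p < q \<and> q \<le> length xs}.
      m (take (Suc p) os @ drop q os)
        (take p xs @ [m (take (Suc (q - p)) (drop p os)) (take (q - p) (drop p xs))] @ drop q xs))"

text \<open>Abstract holomorphic polygon maps: adm is weak admissibility of a
  multi-diagram (Sigma, os, z); m os xs is the polygon count m_n.\<close>

definition polygon_maps :: "('o \<Rightarrow> 'o \<Rightarrow> 'g set) \<Rightarrow> ('o list \<Rightarrow> bool) \<Rightarrow>
    ('o list \<Rightarrow> ('g \<Rightarrow> bit) list \<Rightarrow> ('g \<Rightarrow> bit)) \<Rightarrow> bool" where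
  "polygon_maps gens adm m \<longleftrightarrow>
     (\<forall>a b. finite (gens a b)) \<and>
     (\<forall>os os'. adm os \<longrightarrow> os' \<in> set (subseqs os) \<longrightarrow> 2 \<le> length os' \<longrightarrow> adm os') \<and>
     (\<forall>os xs. adm os \<longrightarrow> composable gens os xs \<longrightarrow> m os xs \<in> CF gens (hd os) (last os)) \<and>
     (\<forall>os xs k x y. adm os \<longrightarrow> composable gens os xs \<longrightarrow> k < length xs \<longrightarrow>
        x \<in> CF gens (os ! k) (os ! Suc k) \<longrightarrow> y \<in> CF gens (os ! k) (os ! Suc k) \<longrightarrow>
        m os (xs[k := x + y]) = m os (xs[k := x]) + m os (xs[k := y])) \<and>
     (\<forall>os xs. adm os \<longrightarrow> composable gens os xs \<longrightarrow> ainf_sum m os xs = 0)"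

definition chains :: "'i::order \<Rightarrow> 'i \<Rightarrow> 'i list set" where
  "chains i j = {cs. cs \<noteq> [] \<and> sorted_wrt (<) cs \<and> hd cs = i \<and> last cs = j}"

definition etas :: "('i \<Rightarrow> 'i \<Rightarrow> 'c) \<Rightarrow> 'i list \<Rightarrow> 'c list" where
  "etas \<eta> cs = map (\<lambda>k. \<eta> (cs ! k) (cs ! Suc k)) [0..<length cs - 1]"

definition filtered_circles :: "('o \<Rightarrow> 'o \<Rightarrow> 'g set) \<Rightarrow> ('o list \<Rightarrow> bool) \<Rightarrow>
    ('o list \<Rightarrow> ('g \<Rightarrow> bit) list \<Rightarrow> ('g \<Rightarrow> bit)) \<Rightarrow>
    ('i::{order,finite} \<Rightarrow> 'o) \<Rightarrow> ('i \<Rightarrow> 'i \<Rightarrow> ('g \<Rightarrow> bit)) \<Rightarrow> bool" where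
  "filtered_circles gens adm m \<beta> \<eta> \<longleftrightarrow>
     (\<forall>cs. 2 \<le> length cs \<longrightarrow> sorted_wrt (<) cs \<longrightarrow> adm (map \<beta> cs)) \<and>
     (\<forall>i j. i < j \<longrightarrow> \<eta> i j \<in> CF gens (\<beta> i) (\<beta> j)) \<and>
     (\<forall>i j. i < j \<longrightarrow> (\<Sum>cs \<in> chains i j. m (map \<beta> cs) (etas \<eta> cs)) = 0)"

definition Dmap :: "('o list \<Rightarrow> ('g \<Rightarrow> bit) list \<Rightarrow> ('g \<Rightarrow> bit)) \<Rightarrow> 'o \<Rightarrow>
    ('i::{order,finite} \<Rightarrow> 'o) \<Rightarrow> ('i \<Rightarrow> 'i \<Rightarrow> ('g \<Rightarrow> bit)) \<Rightarrow> 'i \<Rightarrow> 'i \<Rightarrow> ('g \<Rightarrow> bit) \<Rightarrow> ('g \<Rightarrow> bit)" where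
  "Dmap m \<alpha> \<beta> \<eta> i j x = (\<Sum>cs \<in> chains i j. m (\<alpha> # map \<beta> cs) (x # etas \<eta> cs))"

end

theory Submission
  imports Defs
begin

text \<open>
  Fix \<open>i < k\<close> and \<open>x \<in> CF(\<alpha>, \<beta>\<^sup>i)\<close>.  For every chain \<open>cs\<close> from \<open>i\<close> to \<open>k\<close> the
  \<open>A\<^sub>\<infinity>\<close> relation for the inputs \<open>x, \<eta>, \<dots>, \<eta>\<close> along \<open>\<alpha>, \<beta>(cs)\<close> vanishes; we sum these
  relations over all chains.  Each term has an inner polygon, which either eats only
  \<open>\<eta>\<close>'s along a sub-chain \<open>s\<close> (\<open>\<eta>\<close>-terms) or eats \<open>x\<close> and the \<open>\<eta>\<close>'s along a prefix (\<open>x\<close>-terms).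
  Grouping the \<open>\<eta>\<close>-terms by the chain left after collapsing \<open>s\<close> to its endpoints, each group
  is a polygon applied to the compatibility sum of the \<open>\<eta>\<close>'s, hence zero by multilinearity.
  The \<open>x\<close>-terms give \<open>m\<^sub>1 \<circ> D\<^sup>i\<^sup><\<^sup>k\<close> (prefix = whole chain), \<open>D\<^sup>i\<^sup><\<^sup>k \<circ> m\<^sub>1\<close> (prefix = \<open>[i]\<close>)
  and \<open>\<Sum>\<^sub>j D\<^sup>j\<^sup><\<^sup>k \<circ> D\<^sup>i\<^sup><\<^sup>j\<close> (proper prefix ending at \<open>j\<close>).
\<close>

lemma add_self_eq_zero: "(f :: 'g \<Rightarrow> bit) + f = 0"
  by (rule ext) simp

lemma CF_zero: "0 \<in> CF gens a b"
  by (simp add: CF_def)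

lemma CF_add: "x \<in> CF gens a b \<Longrightarrow> y \<in> CF gens a b \<Longrightarrow> x + y \<in> CF gens a b"
  by (auto simp: CF_def)

lemma CF_sum: "(\<And>s. s \<in> S \<Longrightarrow> f s \<in> CF gens a b) \<Longrightarrow> sum f S \<in> CF gens a b"
  by (induction S rule: infinite_finite_induct) (auto simp: CF_zero CF_add)

lemma sorted_less_distinct: "sorted_wrt (<) (xs :: 'a::order list) \<Longrightarrow> distinct xs"
  by (induction xs) auto

lemma sorted_less_between_hd_last:
  "sorted_wrt (<) (s :: 'a::order list) \<Longrightarrow> y \<in> set s \<Longrightarrow> hd s \<le> y \<and> y \<le> last s"
proof (induction s)
  case (Cons a s)
  then show ?case
    by (cases "s = []") (auto intro: less_imp_le dest: bspec[of _ _ "last s"])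
qed simp

lemma chains_length_le: "cs \<in> chains (i :: 'i::{order,finite}) j \<Longrightarrow> length cs \<le> card (UNIV :: 'i set)"
proof -
  assume "cs \<in> chains i j"
  hence "distinct cs" unfolding chains_def using sorted_less_distinct by auto
  hence "length cs = card (set cs)" by (simp add: distinct_card)
  also have "\<dots> \<le> card (UNIV :: 'i set)" by (rule card_mono) auto
  finally show ?thesis .
qed

lemma finite_chains: "finite (chains (i :: 'i::{order,finite}) j)"
proof (rule finite_subset)
  show "chains i j \<subseteq> {xs. set xs \<subseteq> UNIV \<and> length xs \<le> card (UNIV :: 'i set)}"
    using chains_length_le by blast
qed (rule finite_lists_length_le, simp)

lemma chains_length_ge_2: "i < j \<Longrightarrow> cs \<in> chains i j \<Longrightarrow> 2 \<le> length cs"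
  unfolding chains_def by (cases cs; cases "tl cs") auto

lemma chain_insert:
  assumes "2 \<le> length s"
  shows "a @ s @ b \<in> chains i k \<longleftrightarrow>
    a @ [hd s, last s] @ b \<in> chains i k \<and> s \<in> chains (hd s) (last s)"
proof -
  obtain u r v where s: "s = u # r @ [v]"
    using assms by (cases s; cases "tl s" rule: rev_cases) auto
  have "sorted_wrt (<) (a @ s @ b) \<longleftrightarrow> sorted_wrt (<) (a @ [u, v] @ b) \<and> sorted_wrt (<) s"
  proof
    assume "sorted_wrt (<) (a @ [u, v] @ b) \<and> sorted_wrt (<) s"
    moreover from this have "\<And>y. y \<in> set s \<Longrightarrow> u \<le> y \<and> y \<le> v"
      using sorted_less_between_hd_last[of s] s by auto
    ultimately show "sorted_wrt (<) (a @ s @ b)"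
      using s by (auto simp: sorted_wrt_append intro: less_le_trans le_less_trans)
  qed (auto simp: s sorted_wrt_append)
  moreover have "hd (a @ s @ b) = hd (a @ [u, v] @ b)" "last (a @ s @ b) = last (a @ [u, v] @ b)"
    using s by (cases a; cases b rule: rev_cases; simp)+
  ultimately show ?thesis
    using s unfolding chains_def by auto
qed

lemma chain_concat:
  assumes "s \<noteq> []" "b \<noteq> []"
  shows "s @ b \<in> chains i k \<longleftrightarrow> s \<in> chains i (last s) \<and> last s # b \<in> chains (last s) k"
proof -
  have "sorted_wrt (<) (s @ b) \<longleftrightarrow> sorted_wrt (<) s \<and> sorted_wrt (<) (last s # b)"
  proof
    assume "sorted_wrt (<) s \<and> sorted_wrt (<) (last s # b)"
    thus "sorted_wrt (<) (s @ b)"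
      using sorted_less_between_hd_last[of s]
      by (auto simp: sorted_wrt_append intro: le_less_trans)
  qed (use assms in \<open>auto simp: sorted_wrt_append\<close>)
  thus ?thesis
    using assms unfolding chains_def by auto
qed

lemma etas_length [simp]: "length (etas \<eta> cs) = length cs - 1"
  by (simp add: etas_def)

lemma etas_nth: "k < length cs - 1 \<Longrightarrow> etas \<eta> cs ! k = \<eta> (cs ! k) (cs ! Suc k)"
  by (simp add: etas_def)

lemma etas_Nil [simp]: "etas \<eta> [] = []"
  and etas_single [simp]: "etas \<eta> [u] = []"
  by (simp_all add: etas_def)

lemma etas_Cons_Cons [simp]: "etas \<eta> (u # v # r) = \<eta> u v # etas \<eta> (v # r)"
  by (rule nth_equalityI) (auto simp: etas_nth nth_Cons split: nat.splits)

lemma etas_append: "s \<noteq> [] \<Longrightarrow> etas \<eta> (s @ b) = etas \<eta> s @ etas \<eta> (last s # b)"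
proof (induction s)
  case (Cons u s)
  then show ?case by (cases s) auto
qed simp

lemma etas_append3:
  "s \<noteq> [] \<Longrightarrow> etas \<eta> (a @ s @ b) = etas \<eta> (a @ [hd s]) @ etas \<eta> s @ etas \<eta> (last s # b)"
proof -
  assume "s \<noteq> []"
  then obtain u t where s: "s = u # t" by (cases s) auto
  have "etas \<eta> ((a @ [u]) @ t @ b) = etas \<eta> (a @ [u]) @ etas \<eta> (u # t @ b)"
    using etas_append[of "a @ [u]" \<eta> "t @ b"] by simp
  moreover have "etas \<eta> ((u # t) @ b) = etas \<eta> (u # t) @ etas \<eta> (last (u # t) # b)"
    by (rule etas_append) simp
  ultimately show ?thesis by (simp add: s)
qed

definition ainf_term ::
    "('o list \<Rightarrow> 'c list \<Rightarrow> 'c) \<Rightarrow> 'o list \<Rightarrow> 'c list \<Rightarrow> nat \<Rightarrow> nat \<Rightarrow> 'c" where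
  "ainf_term m os xs p q = m (take (Suc p) os @ drop q os)
     (take p xs @ [m (take (Suc (q - p)) (drop p os)) (take (q - p) (drop p xs))] @ drop q xs)"

text \<open>Applied to the inputs \<open>x, \<eta>, \<dots>, \<eta>\<close> along \<open>\<alpha>, \<beta>(a @ s @ b)\<close>, the terms of the \<open>A\<^sub>\<infinity>\<close>
  relation are of two kinds.  Either the inner polygon only eats \<open>\<eta>\<close>'s, along a sub-chain \<open>s\<close>
  of length \<open>\<ge> 2\<close> (\<open>eta_term\<close>), or it eats \<open>x\<close> together with the \<open>\<eta>\<close>'s along a prefix
  \<open>s\<close> (\<open>x_term\<close>).\<close>

definition eta_term :: "('o list \<Rightarrow> 'c list \<Rightarrow> 'c) \<Rightarrow> 'o \<Rightarrow> ('i \<Rightarrow> 'o) \<Rightarrow> ('i \<Rightarrow> 'i \<Rightarrow> 'c) \<Rightarrow>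
    'c \<Rightarrow> 'i list \<times> 'i list \<times> 'i list \<Rightarrow> 'c" where
  "eta_term m \<alpha> \<beta> \<eta> x = (\<lambda>(a, s, b). m (\<alpha> # map \<beta> (a @ [hd s, last s] @ b))
     (x # etas \<eta> (a @ [hd s]) @ [m (map \<beta> s) (etas \<eta> s)] @ etas \<eta> (last s # b)))"

definition x_term :: "('o list \<Rightarrow> 'c list \<Rightarrow> 'c) \<Rightarrow> 'o \<Rightarrow> ('i \<Rightarrow> 'o) \<Rightarrow> ('i \<Rightarrow> 'i \<Rightarrow> 'c) \<Rightarrow>
    'c \<Rightarrow> 'i list \<times> 'i list \<Rightarrow> 'c" where
  "x_term m \<alpha> \<beta> \<eta> x = (\<lambda>(s, b). m (\<alpha> # map \<beta> (last s # b))
     (m (\<alpha> # map \<beta> s) (x # etas \<eta> s) # etas \<eta> (last s # b)))"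

lemma ainf_term_eta:
  assumes "2 \<le> length s"
  shows "ainf_term m (\<alpha> # map \<beta> (a @ s @ b)) (x # etas \<eta> (a @ s @ b)) (Suc (length a)) (length a + length s)
     = eta_term m \<alpha> \<beta> \<eta> x (a, s, b)"
proof -
  obtain u r v where s: "s = u # r @ [v]"
    using assms by (cases s; cases "tl s" rule: rev_cases) auto
  have etas_split: "etas \<eta> (a @ u # r @ v # b) = etas \<eta> (a @ [u]) @ etas \<eta> (u # r @ [v]) @ etas \<eta> (v # b)"
    using etas_append3[of s \<eta> a b] s by simp
  have "length (etas \<eta> (a @ [u])) = length a" "length (etas \<eta> (u # r @ [v])) = Suc (length r)"
    by simp_all
  then show ?thesis
    unfolding ainf_term_def eta_term_def by (simp add: s etas_split del: etas_length)
qed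

lemma ainf_term_x:
  assumes "s \<noteq> []"
  shows "ainf_term m (\<alpha> # map \<beta> (s @ b)) (x # etas \<eta> (s @ b)) 0 (length s) = x_term m \<alpha> \<beta> \<eta> x (s, b)"
proof -
  obtain r v where s: "s = r @ [v]"
    using assms by (cases s rule: rev_cases) auto
  have etas_split: "etas \<eta> (r @ v # b) = etas \<eta> (r @ [v]) @ etas \<eta> (v # b)"
    using etas_append[of s \<eta> b] s by simp
  have "length (etas \<eta> (r @ [v])) = length r" by simp
  then show ?thesis
    unfolding ainf_term_def x_term_def by (simp add: s etas_split del: etas_length)
qed

definition x_splittings :: "'a list set \<Rightarrow> ('a list \<times> 'a list) set" where
  "x_splittings C = {(s, b). s @ b \<in> C \<and> s \<noteq> []}"

definition eta_splittings :: "'a list set \<Rightarrow> ('a list \<times> 'a list \<times> 'a list) set" where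
  "eta_splittings C = {(a, s, b). a @ s @ b \<in> C \<and> 2 \<le> length s}"

lemma finite_x_splittings: "finite C \<Longrightarrow> finite (x_splittings C)"
proof (rule finite_subset)
  show "x_splittings C \<subseteq> (\<Union>cs\<in>C. (\<lambda>n. (take n cs, drop n cs)) ` {..length cs})"
    unfolding x_splittings_def
  proof clarify
    fix s b assume "s @ b \<in> C"
    thus "(s, b) \<in> (\<Union>cs\<in>C. (\<lambda>n. (take n cs, drop n cs)) ` {..length cs})"
      by (intro UN_I[of "s @ b"] image_eqI[of _ _ "length s"]) auto
  qed
qed blast

lemma finite_eta_splittings: "finite C \<Longrightarrow> finite (eta_splittings C)"
proof (rule finite_subset)
  let ?cut = "\<lambda>cs (p, q). (take p cs, take q (drop p cs), drop (p + q) cs)"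
  show "eta_splittings C \<subseteq> (\<Union>cs\<in>C. ?cut cs ` ({..length cs} \<times> {..length cs}))"
    unfolding eta_splittings_def
  proof clarify
    fix a s b assume "a @ s @ b \<in> C"
    thus "(a, s, b) \<in> (\<Union>cs\<in>C. ?cut cs ` ({..length cs} \<times> {..length cs}))"
      by (intro UN_I[of "a @ s @ b"] image_eqI[of _ _ "(length a, length s)"]) auto
  qed
qed blast

lemma eta_positions:
  "(\<Sum>(p, q)\<in>{(p, q). 0 < p \<and> p < q \<and> q \<le> length cs}. ainf_term m (\<alpha> # map \<beta> cs) (x # etas \<eta> cs) p q)
    = sum (eta_term m \<alpha> \<beta> \<eta> x) (eta_splittings {cs})"
proof (rule sum.reindex_bij_witness[where i = "\<lambda>(a, s, b). (Suc (length a), length a + length s)"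
      and j = "\<lambda>(p, q). (take (p - 1) cs, take (Suc (q - p)) (drop (p - 1) cs), drop q cs)"])
  fix pq assume "pq \<in> {(p, q). 0 < p \<and> p < q \<and> q \<le> length cs}"
  then obtain p q where pq: "pq = (p, q)" "0 < p" "p < q" "q \<le> length cs" by auto
  define a s b where "a = take (p - 1) cs" and "s = take (Suc (q - p)) (drop (p - 1) cs)"
    and "b = drop q cs"
  have cut: "(\<lambda>(p, q). (take (p - 1) cs, take (Suc (q - p)) (drop (p - 1) cs), drop q cs)) pq = (a, s, b)"
    unfolding a_def s_def b_def pq by simp
  have glue: "a @ s @ b = cs"
  proof -
    have "drop (Suc (q - p)) (drop (p - 1) cs) = drop q cs" using pq by simp
    then show ?thesis unfolding a_def s_def b_def by (metis append_take_drop_id)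
  qed
  have len: "Suc (length a) = p" "length a + length s = q" "2 \<le> length s"
    using pq unfolding a_def s_def by auto
  show "(\<lambda>(a, s, b). (Suc (length a), length a + length s))
      ((\<lambda>(p, q). (take (p - 1) cs, take (Suc (q - p)) (drop (p - 1) cs), drop q cs)) pq) = pq"
    unfolding cut using len pq by simp
  show "(\<lambda>(p, q). (take (p - 1) cs, take (Suc (q - p)) (drop (p - 1) cs), drop q cs)) pq \<in> eta_splittings {cs}"
    unfolding cut eta_splittings_def using glue len by simp
  have "(\<lambda>(p, q). ainf_term m (\<alpha> # map \<beta> cs) (x # etas \<eta> cs) p q) pq = eta_term m \<alpha> \<beta> \<eta> x (a, s, b)"
    using ainf_term_eta[OF len(3), of m \<alpha> \<beta> a b x \<eta>] unfolding glue len(1,2) pq(1) by simp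
  then show "eta_term m \<alpha> \<beta> \<eta> x ((\<lambda>(p, q). (take (p - 1) cs, take (Suc (q - p)) (drop (p - 1) cs), drop q cs)) pq)
      = (\<lambda>(p, q). ainf_term m (\<alpha> # map \<beta> cs) (x # etas \<eta> cs) p q) pq"
    unfolding cut by simp
next
  fix t assume "t \<in> eta_splittings {cs}"
  then obtain a s b where t: "t = (a, s, b)" "cs = a @ s @ b" "2 \<le> length s"
    unfolding eta_splittings_def by auto
  show "(\<lambda>(p, q). (take (p - 1) cs, take (Suc (q - p)) (drop (p - 1) cs), drop q cs))
      ((\<lambda>(a, s, b). (Suc (length a), length a + length s)) t) = t"
    using t(3) unfolding t(1,2) by simp
  show "(\<lambda>(a, s, b). (Suc (length a), length a + length s)) t \<in> {(p, q). 0 < p \<and> p < q \<and> q \<le> length cs}"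
    using t(3) unfolding t(1,2) by simp
qed

lemma x_positions:
  "(\<Sum>(p, q)\<in>{(p, q). p = (0::nat) \<and> 0 < q \<and> q \<le> length cs}. ainf_term m (\<alpha> # map \<beta> cs) (x # etas \<eta> cs) p q)
    = sum (x_term m \<alpha> \<beta> \<eta> x) (x_splittings {cs})"
proof (rule sum.reindex_bij_witness[where i = "\<lambda>(s, b). (0, length s)"
      and j = "\<lambda>(p, q). (take q cs, drop q cs)"])
  fix pq assume "pq \<in> {(p, q). p = (0::nat) \<and> 0 < q \<and> q \<le> length cs}"
  then obtain q where pq: "pq = (0, q)" "0 < q" "q \<le> length cs" by auto
  have ne: "take q cs \<noteq> []" and len: "length (take q cs) = q" using pq by auto
  show "(\<lambda>(s, b). (0, length s)) ((\<lambda>(p, q). (take q cs, drop q cs)) pq) = pq"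
    unfolding pq using len by simp
  show "(\<lambda>(p, q). (take q cs, drop q cs)) pq \<in> x_splittings {cs}"
    unfolding pq x_splittings_def using ne by simp
  show "x_term m \<alpha> \<beta> \<eta> x ((\<lambda>(p, q). (take q cs, drop q cs)) pq) = (\<lambda>(p, q). ainf_term m (\<alpha> # map \<beta> cs) (x # etas \<eta> cs) p q) pq"
    using ainf_term_x[OF ne, of m \<alpha> \<beta> "drop q cs" x \<eta>] unfolding pq len by simp
next
  fix t assume "t \<in> x_splittings {cs}"
  then obtain s b where t: "t = (s, b)" "cs = s @ b" "s \<noteq> []"
    unfolding x_splittings_def by auto
  show "(\<lambda>(p, q). (take q cs, drop q cs)) ((\<lambda>(s, b). (0, length s)) t) = t"
    unfolding t by simp
  show "(\<lambda>(s, b). (0, length s)) t \<in> {(p, q). p = (0::nat) \<and> 0 < q \<and> q \<le> length cs}"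
    using t(3) unfolding t(1,2) by simp
qed

lemma ainf_sum_split:
  assumes "cs \<noteq> []"
  shows "ainf_sum m (\<alpha> # map \<beta> cs) (x # etas \<eta> cs)
    = sum (eta_term m \<alpha> \<beta> \<eta> x) (eta_splittings {cs}) + sum (x_term m \<alpha> \<beta> \<eta> x) (x_splittings {cs})"
proof -
  let ?g = "\<lambda>(p, q). ainf_term m (\<alpha> # map \<beta> cs) (x # etas \<eta> cs) p q"
  let ?P = "{(p, q). (0::nat) < p \<and> p < q \<and> q \<le> length cs}"
  let ?Q = "{(p, q). p = (0::nat) \<and> 0 < q \<and> q \<le> length cs}"
  have finP: "finite ?P" by (rule finite_subset[of _ "{..length cs} \<times> {..length cs}"]) auto
  have finQ: "finite ?Q" by (rule finite_subset[of _ "{..length cs} \<times> {..length cs}"]) auto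
  have pairs: "{(p, q). p < q \<and> q \<le> length (x # etas \<eta> cs)} = ?P \<union> ?Q"
    using assms by auto
  have "ainf_sum m (\<alpha> # map \<beta> cs) (x # etas \<eta> cs)
      = sum ?g {(p, q). p < q \<and> q \<le> length (x # etas \<eta> cs)}"
    unfolding ainf_sum_def ainf_term_def ..
  also have "\<dots> = sum ?g (?P \<union> ?Q)"
    by (simp only: pairs)
  also have "\<dots> = sum ?g ?P + sum ?g ?Q"
    by (rule sum.union_disjoint[OF finP finQ]) auto
  also have "sum ?g ?P = sum (eta_term m \<alpha> \<beta> \<eta> x) (eta_splittings {cs})"
    by (rule eta_positions)
  also have "sum ?g ?Q = sum (x_term m \<alpha> \<beta> \<eta> x) (x_splittings {cs})"
    by (rule x_positions)
  finally show ?thesis .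
qed

lemma chains_Cons_tl: "c \<in> chains i k \<Longrightarrow> c = i # tl c"
  unfolding chains_def by (cases c) auto

lemma x_splittings_chains:
  "x_splittings (chains i k) = (\<lambda>s. (s, [])) ` chains i k \<union> (\<lambda>c. ([i], tl c)) ` chains i k
     \<union> {(s, b). s @ b \<in> chains i k \<and> 2 \<le> length s \<and> b \<noteq> []}"
proof (intro equalityI subsetI)
  fix t assume "t \<in> x_splittings (chains i k)"
  then obtain s b where t: "t = (s, b)" "s @ b \<in> chains i k" "s \<noteq> []"
    unfolding x_splittings_def by auto
  consider "b = []" | "b \<noteq> []" "s = [i]" | "b \<noteq> []" "2 \<le> length s"
    using t(2,3) chains_Cons_tl[OF t(2)] by (cases s; cases "tl s") auto
  then show "t \<in> (\<lambda>s. (s, [])) ` chains i k \<union> (\<lambda>c. ([i], tl c)) ` chains i k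
     \<union> {(s, b). s @ b \<in> chains i k \<and> 2 \<le> length s \<and> b \<noteq> []}"
  proof cases
    case 2
    then have "t = (\<lambda>c. ([i], tl c)) (s @ b)" using t(1) by simp
    then show ?thesis using t(2) by blast
  qed (use t in auto)
next
  fix t assume "t \<in> (\<lambda>s. (s, [])) ` chains i k \<union> (\<lambda>c. ([i], tl c)) ` chains i k
     \<union> {(s, b). s @ b \<in> chains i k \<and> 2 \<le> length s \<and> b \<noteq> []}"
  then show "t \<in> x_splittings (chains i k)"
    unfolding x_splittings_def by (auto dest: chains_Cons_tl simp: chains_def)
qed

lemma sum_eta_splittings:
  "finite C \<Longrightarrow> (\<Sum>cs\<in>C. sum h (eta_splittings {cs})) = sum h (eta_splittings C)"
proof -
  assume C: "finite C"
  have "(\<Sum>cs\<in>C. sum h (eta_splittings {cs}))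
      = (\<Sum>cs\<in>C. sum h {t \<in> eta_splittings C. (\<lambda>(a, s, b). a @ s @ b) t = cs})"
    by (rule sum.cong[OF refl]) (auto simp: eta_splittings_def intro!: arg_cong[where f = "sum h"])
  also have "\<dots> = sum h (eta_splittings C)"
    using C finite_eta_splittings[OF C] by (intro sum.group) (auto simp: eta_splittings_def)
  finally show ?thesis .
qed

lemma sum_x_splittings:
  "finite C \<Longrightarrow> (\<Sum>cs\<in>C. sum h (x_splittings {cs})) = sum h (x_splittings C)"
proof -
  assume C: "finite C"
  have "(\<Sum>cs\<in>C. sum h (x_splittings {cs}))
      = (\<Sum>cs\<in>C. sum h {t \<in> x_splittings C. (\<lambda>(s, b). s @ b) t = cs})"
    by (rule sum.cong[OF refl]) (auto simp: x_splittings_def intro!: arg_cong[where f = "sum h"])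
  also have "\<dots> = sum h (x_splittings C)"
    using C finite_x_splittings[OF C] by (intro sum.group) (auto simp: x_splittings_def)
  finally show ?thesis .
qed

locale twisted_complex =
  fixes gens :: "'o \<Rightarrow> 'o \<Rightarrow> 'g set"
    and adm :: "'o list \<Rightarrow> bool"
    and m :: "'o list \<Rightarrow> ('g \<Rightarrow> bit) list \<Rightarrow> ('g \<Rightarrow> bit)"
    and \<beta> :: "'i::{order,finite} \<Rightarrow> 'o"
    and \<eta> :: "'i \<Rightarrow> 'i \<Rightarrow> ('g \<Rightarrow> bit)"
    and \<alpha> :: 'o
  assumes polygon: "polygon_maps gens adm m"
    and filtered: "filtered_circles gens adm m \<beta> \<eta>"
    and adm_alpha: "\<forall>cs. cs \<noteq> [] \<longrightarrow> sorted_wrt (<) cs \<longrightarrow> adm (\<alpha> # map \<beta> cs)"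
begin

lemma m_in_CF: "adm os \<Longrightarrow> composable gens os xs \<Longrightarrow> m os xs \<in> CF gens (hd os) (last os)"
  using polygon unfolding polygon_maps_def by blast

lemma ainf_relation: "adm os \<Longrightarrow> composable gens os xs \<Longrightarrow> ainf_sum m os xs = 0"
  using polygon unfolding polygon_maps_def by blast

lemma m_additive:
  assumes "adm os" "composable gens os xs" "k < length xs"
    and "x \<in> CF gens (os ! k) (os ! Suc k)" "y \<in> CF gens (os ! k) (os ! Suc k)"
  shows "m os (xs[k := x + y]) = m os (xs[k := x]) + m os (xs[k := y])"
  using polygon assms unfolding polygon_maps_def by blast

lemma m_zero_input:
  assumes "adm os" "composable gens os xs" "k < length xs"
  shows "m os (xs[k := 0]) = 0"
proof -
  have "m os (xs[k := 0]) = m os (xs[k := 0 + 0])" by simp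
  also have "\<dots> = m os (xs[k := 0]) + m os (xs[k := 0])"
    by (rule m_additive[OF assms]) (rule CF_zero)+
  also have "\<dots> = 0" by (rule add_self_eq_zero)
  finally show ?thesis .
qed

lemma m_sum_input:
  assumes "adm os" "composable gens os xs" "k < length xs" "finite S"
    and "\<And>s. s \<in> S \<Longrightarrow> f s \<in> CF gens (os ! k) (os ! Suc k)"
  shows "m os (xs[k := sum f S]) = (\<Sum>s\<in>S. m os (xs[k := f s]))"
  using assms(4,5)
proof (induction S rule: finite_induct)
  case empty
  show ?case using m_zero_input[OF assms(1-3)] by (simp only: sum.empty)
next
  case (insert a S)
  have "m os (xs[k := f a + sum f S]) = m os (xs[k := f a]) + m os (xs[k := sum f S])"
    using insert.prems by (intro m_additive[OF assms(1-3)]) (auto intro: CF_sum)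
  then show ?case
    using insert.IH insert.prems by (simp only: sum.insert[OF insert.hyps] insert_iff simp_thms)
qed

lemma eta_in_CF: "a < b \<Longrightarrow> \<eta> a b \<in> CF gens (\<beta> a) (\<beta> b)"
  using filtered unfolding filtered_circles_def by blast

lemma eta_relation: "u < v \<Longrightarrow> (\<Sum>s\<in>chains u v. m (map \<beta> s) (etas \<eta> s)) = 0"
  using filtered unfolding filtered_circles_def by blast

lemma composable_etas:
  assumes "sorted_wrt (<) cs" "k < length cs - 1"
  shows "etas \<eta> cs ! k \<in> CF gens (\<beta> (cs ! k)) (\<beta> (cs ! Suc k))"
proof -
  have "cs ! k < cs ! Suc k" using assms by (simp add: sorted_wrt_nth_less)
  then show ?thesis using assms(2) by (simp add: etas_nth eta_in_CF)
qed

lemma composable_chain: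
  assumes "2 \<le> length cs" "sorted_wrt (<) cs"
  shows "composable gens (map \<beta> cs) (etas \<eta> cs)"
proof -
  have "length (etas \<eta> cs) \<noteq> 0" using assms(1) by simp
  then have "etas \<eta> cs \<noteq> []" by (metis list.size(3))
  then show ?thesis
    using assms composable_etas unfolding composable_def by auto
qed

lemma composable_alpha_chain:
  assumes "cs \<noteq> []" "sorted_wrt (<) cs" "x \<in> CF gens \<alpha> (\<beta> (hd cs))"
  shows "composable gens (\<alpha> # map \<beta> cs) (x # etas \<eta> cs)"
  unfolding composable_def
proof (intro conjI allI impI)
  fix k assume k: "k < length (x # etas \<eta> cs)"
  show "(x # etas \<eta> cs) ! k \<in> CF gens ((\<alpha> # map \<beta> cs) ! k) ((\<alpha> # map \<beta> cs) ! Suc k)"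
  proof (cases k)
    case 0
    then show ?thesis using assms by (simp add: hd_conv_nth)
  next
    case (Suc k')
    then show ?thesis using k assms(2) composable_etas[of cs k'] by simp
  qed
qed (use assms in simp_all)

lemma eta_polygon_in_CF:
  assumes "2 \<le> length s" "sorted_wrt (<) s"
  shows "m (map \<beta> s) (etas \<eta> s) \<in> CF gens (\<beta> (hd s)) (\<beta> (last s))"
proof -
  have "adm (map \<beta> s)" using filtered assms unfolding filtered_circles_def by blast
  moreover have "s \<noteq> []" using assms by auto
  ultimately show ?thesis
    using m_in_CF[OF _ composable_chain[OF assms]] by (simp add: hd_map last_map)
qed

lemma alpha_polygon_in_CF:
  assumes "s \<in> chains i j" "x \<in> CF gens \<alpha> (\<beta> i)"
  shows "m (\<alpha> # map \<beta> s) (x # etas \<eta> s) \<in> CF gens \<alpha> (\<beta> j)"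
proof -
  have s: "s \<noteq> []" "sorted_wrt (<) s" "hd s = i" "last s = j"
    using assms(1) unfolding chains_def by auto
  have "adm (\<alpha> # map \<beta> s)" using adm_alpha s by blast
  moreover have "composable gens (\<alpha> # map \<beta> s) (x # etas \<eta> s)"
    using composable_alpha_chain[of s x] s assms(2) by simp
  ultimately show ?thesis
    using m_in_CF s by (fastforce simp: last_map)
qed

lemma D_in_CF: "x \<in> CF gens \<alpha> (\<beta> i) \<Longrightarrow> Dmap m \<alpha> \<beta> \<eta> i j x \<in> CF gens \<alpha> (\<beta> j)"
  unfolding Dmap_def by (rule CF_sum) (rule alpha_polygon_in_CF)

lemma D_additive:
  assumes "x \<in> CF gens \<alpha> (\<beta> i)" "y \<in> CF gens \<alpha> (\<beta> i)"
  shows "Dmap m \<alpha> \<beta> \<eta> i j (x + y) = Dmap m \<alpha> \<beta> \<eta> i j x + Dmap m \<alpha> \<beta> \<eta> i j y"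
  unfolding Dmap_def sum.distrib[symmetric]
proof (rule sum.cong[OF refl])
  fix cs assume "cs \<in> chains i j"
  then have cs: "cs \<noteq> []" "sorted_wrt (<) cs" "hd cs = i" unfolding chains_def by auto
  have "adm (\<alpha> # map \<beta> cs)" using adm_alpha cs by blast
  moreover have "composable gens (\<alpha> # map \<beta> cs) (x # etas \<eta> cs)"
    using composable_alpha_chain[of cs x] cs assms(1) by simp
  ultimately have "m (\<alpha> # map \<beta> cs) ((x # etas \<eta> cs)[0 := x + y])
      = m (\<alpha> # map \<beta> cs) ((x # etas \<eta> cs)[0 := x]) + m (\<alpha> # map \<beta> cs) ((x # etas \<eta> cs)[0 := y])"
    using cs assms by (intro m_additive) (simp_all add: hd_conv_nth)
  then show "m (\<alpha> # map \<beta> cs) ((x + y) # etas \<eta> cs)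
      = m (\<alpha> # map \<beta> cs) (x # etas \<eta> cs) + m (\<alpha> # map \<beta> cs) (y # etas \<eta> cs)"
    by simp
qed

lemma differential_squared:
  assumes "x \<in> CF gens \<alpha> (\<beta> i)"
  shows "m [\<alpha>, \<beta> i] [m [\<alpha>, \<beta> i] [x]] = 0"
proof -
  have "adm [\<alpha>, \<beta> i]" using adm_alpha[rule_format, of "[i]"] by simp
  moreover have "composable gens [\<alpha>, \<beta> i] [x]" using assms by (simp add: composable_def)
  ultimately have "ainf_sum m [\<alpha>, \<beta> i] [x] = 0" by (rule ainf_relation)
  moreover have "{(p, q). p < q \<and> q \<le> length [x]} = {(0, 1)}" by auto
  ultimately show ?thesis unfolding ainf_sum_def by simp
qed

lemma polygon_of_D:
  assumes c: "c \<in> chains j k" and y: "y \<in> CF gens \<alpha> (\<beta> i)"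
  shows "(\<Sum>s\<in>chains i j. m (\<alpha> # map \<beta> c) (m (\<alpha> # map \<beta> s) (y # etas \<eta> s) # etas \<eta> c))
    = m (\<alpha> # map \<beta> c) (Dmap m \<alpha> \<beta> \<eta> i j y # etas \<eta> c)"
proof -
  let ?os = "\<alpha> # map \<beta> c" and ?xs = "Dmap m \<alpha> \<beta> \<eta> i j y # etas \<eta> c"
  let ?f = "\<lambda>s. m (\<alpha> # map \<beta> s) (y # etas \<eta> s)"
  have chain: "c \<noteq> []" "sorted_wrt (<) c" "hd c = j" using c unfolding chains_def by auto
  have adm: "adm ?os" using adm_alpha chain by blast
  have comp: "composable gens ?os ?xs"
    using composable_alpha_chain[OF chain(1,2)] D_in_CF[OF y] chain(3) by simp
  have f_in_CF: "?f s \<in> CF gens (?os ! 0) (?os ! Suc 0)" if "s \<in> chains i j" for s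
    using alpha_polygon_in_CF[OF that y] chain by (simp add: hd_conv_nth)
  have "m ?os ?xs = m ?os (?xs[0 := sum ?f (chains i j)])"
    by (simp add: Dmap_def)
  also have "\<dots> = (\<Sum>s\<in>chains i j. m ?os (?xs[0 := ?f s]))"
    by (rule m_sum_input[OF adm comp _ finite_chains]) (simp, erule f_in_CF)
  finally show ?thesis by simp
qed

context
  fixes i k :: 'i and x :: "'g \<Rightarrow> bit"
  assumes i_less_k: "i < k" and x_in_CF: "x \<in> CF gens \<alpha> (\<beta> i)"
begin

text \<open>For an outer chain \<open>a @ [u, v] @ b\<close>, the \<open>\<eta>\<close>-terms whose inner polygon runs from \<open>u\<close>
  to \<open>v\<close> add up to the outer polygon with the compatibility sum of \<open>\<eta>\<close> from \<open>u\<close> to \<open>v\<close>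
  as input, which is zero.\<close>

lemma eta_terms_vanish:
  assumes outer: "a @ [u, v] @ b \<in> chains i k"
  shows "(\<Sum>s\<in>chains u v. eta_term m \<alpha> \<beta> \<eta> x (a, s, b)) = 0"
proof -
  let ?os = "\<alpha> # map \<beta> (a @ [u, v] @ b)" and ?xs = "x # etas \<eta> (a @ [u, v] @ b)"
  let ?n = "Suc (length a)" and ?f = "\<lambda>s. m (map \<beta> s) (etas \<eta> s)"
  have chain: "a @ [u, v] @ b \<noteq> []" "sorted_wrt (<) (a @ [u, v] @ b)" "hd (a @ [u, v] @ b) = i"
    using outer unfolding chains_def by auto
  then have uv: "u < v" by (simp add: sorted_wrt_append)
  have adm: "adm ?os" using adm_alpha chain by blast
  have comp: "composable gens ?os ?xs"
    using composable_alpha_chain[OF chain(1,2)] chain(3) x_in_CF by simp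
  have n: "?n < length ?xs" by simp
  have etas_outer: "etas \<eta> (a @ [u, v] @ b) = etas \<eta> (a @ [u]) @ [\<eta> u v] @ etas \<eta> (v # b)"
    using etas_append3[of "[u, v]" \<eta> a b] by simp
  have as_update: "eta_term m \<alpha> \<beta> \<eta> x (a, s, b) = m ?os (?xs[?n := ?f s])" if "s \<in> chains u v" for s
  proof -
    have "hd s = u" "last s = v" using that unfolding chains_def by auto
    moreover have "?xs[?n := ?f s] = x # etas \<eta> (a @ [u]) @ [?f s] @ etas \<eta> (v # b)"
      unfolding etas_outer by (simp add: list_update_append)
    ultimately show ?thesis unfolding eta_term_def by simp
  qed
  have inner_in_CF: "?f s \<in> CF gens (?os ! ?n) (?os ! Suc ?n)" if "s \<in> chains u v" for s
  proof -
    have "2 \<le> length s" "sorted_wrt (<) s" "hd s = u" "last s = v"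
      using that chains_length_ge_2[OF uv] unfolding chains_def by auto
    then show ?thesis using eta_polygon_in_CF[of s] by (simp add: nth_append)
  qed
  have "(\<Sum>s\<in>chains u v. eta_term m \<alpha> \<beta> \<eta> x (a, s, b)) = (\<Sum>s\<in>chains u v. m ?os (?xs[?n := ?f s]))"
    using as_update by (rule sum.cong[OF refl])
  also have "\<dots> = m ?os (?xs[?n := sum ?f (chains u v)])"
    by (rule sym, rule m_sum_input[OF adm comp n finite_chains]) (rule inner_in_CF)
  also have "\<dots> = 0"
    using eta_relation[OF uv] m_zero_input[OF adm comp n] by simp
  finally show ?thesis .
qed

text \<open>Hence all \<open>\<eta>\<close>-terms cancel: group them by the outer chain.\<close>

lemma eta_terms_cancel: "sum (eta_term m \<alpha> \<beta> \<eta> x) (eta_splittings (chains i k)) = 0"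
proof -
  let ?S = "eta_splittings (chains i k)" and ?h = "eta_term m \<alpha> \<beta> \<eta> x"
  let ?outer = "\<lambda>(a, s, b). (a, hd s, last s, b)"
  have outer_chain: "a @ [u, v] @ b \<in> chains i k" if "(a, u, v, b) \<in> ?outer ` ?S" for a u v b
    using that chain_insert unfolding eta_splittings_def by fastforce
  have fiber: "{t \<in> ?S. ?outer t = (a, u, v, b)} = (\<lambda>s. (a, s, b)) ` chains u v"
    if outer: "a @ [u, v] @ b \<in> chains i k" for a u v b
  proof (intro equalityI subsetI)
    fix t assume "t \<in> {t \<in> ?S. ?outer t = (a, u, v, b)}"
    then obtain s where t: "t = (a, s, b)" "a @ s @ b \<in> chains i k" "2 \<le> length s"
      "hd s = u" "last s = v"
      unfolding eta_splittings_def by auto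
    then show "t \<in> (\<lambda>s. (a, s, b)) ` chains u v" using chain_insert[of s a b i k] by simp
  next
    fix t assume "t \<in> (\<lambda>s. (a, s, b)) ` chains u v"
    then obtain s where t: "t = (a, s, b)" "s \<in> chains u v" by auto
    have "u < v" using outer unfolding chains_def by (simp add: sorted_wrt_append)
    then have s: "2 \<le> length s" "hd s = u" "last s = v"
      using t(2) chains_length_ge_2 unfolding chains_def by auto
    then have "a @ s @ b \<in> chains i k" using chain_insert[of s a b i k] outer t(2) by simp
    then show "t \<in> {t \<in> ?S. ?outer t = (a, u, v, b)}" using t s unfolding eta_splittings_def by simp
  qed
  have "sum ?h ?S = (\<Sum>y \<in> ?outer ` ?S. sum ?h {t \<in> ?S. ?outer t = y})"
    using finite_eta_splittings[OF finite_chains] by (intro sum.group[symmetric]) auto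
  also have "\<dots> = (\<Sum>y \<in> ?outer ` ?S. 0)"
  proof (rule sum.cong[OF refl])
    fix y assume y: "y \<in> ?outer ` ?S"
    obtain a u v b where y_eq: "y = (a, u, v, b)" by (cases y)
    have outer: "a @ [u, v] @ b \<in> chains i k" using outer_chain y unfolding y_eq by blast
    have "sum ?h {t \<in> ?S. ?outer t = y} = (\<Sum>s\<in>chains u v. ?h (a, s, b))"
      unfolding y_eq fiber[OF outer] by (rule sum.reindex_cong[OF _ refl refl]) (simp add: inj_on_def)
    also have "\<dots> = 0" by (rule eta_terms_vanish[OF outer])
    finally show "sum ?h {t \<in> ?S. ?outer t = y} = 0" .
  qed
  finally show ?thesis by simp
qed

lemma x_terms_last:
  "(\<Sum>s\<in>chains i k. x_term m \<alpha> \<beta> \<eta> x (s, [])) = m [\<alpha>, \<beta> k] [Dmap m \<alpha> \<beta> \<eta> i k x]"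
proof -
  have "(\<Sum>s\<in>chains i k. x_term m \<alpha> \<beta> \<eta> x (s, []))
      = (\<Sum>s\<in>chains i k. m (\<alpha> # map \<beta> [k]) (m (\<alpha> # map \<beta> s) (x # etas \<eta> s) # etas \<eta> [k]))"
    by (rule sum.cong[OF refl]) (simp add: x_term_def chains_def)
  also have "\<dots> = m (\<alpha> # map \<beta> [k]) (Dmap m \<alpha> \<beta> \<eta> i k x # etas \<eta> [k])"
    by (rule polygon_of_D[OF _ x_in_CF]) (simp add: chains_def)
  finally show ?thesis by simp
qed

lemma x_terms_first:
  "(\<Sum>c\<in>chains i k. x_term m \<alpha> \<beta> \<eta> x ([i], tl c)) = Dmap m \<alpha> \<beta> \<eta> i k (m [\<alpha>, \<beta> i] [x])"
  unfolding Dmap_def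
proof (rule sum.cong[OF refl])
  fix c assume "c \<in> chains i k"
  then obtain t where c: "c = i # t" unfolding chains_def by (cases c) auto
  show "x_term m \<alpha> \<beta> \<eta> x ([i], tl c) = m (\<alpha> # map \<beta> c) (m [\<alpha>, \<beta> i] [x] # etas \<eta> c)"
    unfolding c by (simp add: x_term_def)
qed

lemma composite_splittings_reindex:
  "sum (x_term m \<alpha> \<beta> \<eta> x) {(s, b). s @ b \<in> chains i k \<and> 2 \<le> length s \<and> b \<noteq> []}
    = sum (\<lambda>(j, c, s). m (\<alpha> # map \<beta> c) (m (\<alpha> # map \<beta> s) (x # etas \<eta> s) # etas \<eta> c))
        (SIGMA j:{j. i < j \<and> j < k}. chains j k \<times> chains i j)"
proof (rule sum.reindex_bij_witness[where j = "\<lambda>(s, b). (last s, last s # b, s)"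
      and i = "\<lambda>(j, c, s). (s, tl c)"])
  fix t assume "t \<in> {(s, b). s @ b \<in> chains i k \<and> 2 \<le> length s \<and> b \<noteq> []}"
  then obtain s b where t: "t = (s, b)" "s @ b \<in> chains i k" "2 \<le> length s" "b \<noteq> []" by auto
  then have s_ne: "s \<noteq> []" by auto
  have parts: "s \<in> chains i (last s)" "last s # b \<in> chains (last s) k"
    using chain_concat[OF s_ne t(4)] t(2) by auto
  then have "i < last s" "last s < k"
    using t(3,4) unfolding chains_def by (auto simp: hd_conv_nth last_conv_nth sorted_wrt_nth_less)
  then show "(\<lambda>(s, b). (last s, last s # b, s)) t \<in> (SIGMA j:{j. i < j \<and> j < k}. chains j k \<times> chains i j)"
    using parts t(1) by simp
  show "(\<lambda>(j, c, s). (s, tl c)) ((\<lambda>(s, b). (last s, last s # b, s)) t) = t"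
    using t(1) by simp
  show "(\<lambda>(j, c, s). m (\<alpha> # map \<beta> c) (m (\<alpha> # map \<beta> s) (x # etas \<eta> s) # etas \<eta> c)) ((\<lambda>(s, b). (last s, last s # b, s)) t) = x_term m \<alpha> \<beta> \<eta> x t"
    using t(1) by (simp add: x_term_def)
next
  fix t assume "t \<in> (SIGMA j:{j. i < j \<and> j < k}. chains j k \<times> chains i j)"
  then obtain j c s where t: "t = (j, c, s)" "i < j" "j < k" "c \<in> chains j k" "s \<in> chains i j"
    by auto
  have s: "2 \<le> length s" "s \<noteq> []" "last s = j" using chains_length_ge_2[OF t(2,5)] t(5)
    unfolding chains_def by auto
  have c: "c = j # tl c" "tl c \<noteq> []" using chains_length_ge_2[OF t(3,4)] t(4)
    unfolding chains_def by (cases c; auto)+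
  have "s @ tl c \<in> chains i k" using chain_concat[OF s(2) c(2)] t(4,5) s(3) c(1) by simp
  then show "(\<lambda>(j, c, s). (s, tl c)) t \<in> {(s, b). s @ b \<in> chains i k \<and> 2 \<le> length s \<and> b \<noteq> []}"
    using t(1) s(1) c(2) by simp
  show "(\<lambda>(s, b). (last s, last s # b, s)) ((\<lambda>(j, c, s). (s, tl c)) t) = t"
    using t(1) s(3) c(1) by simp
qed

lemma x_terms_composite:
  "sum (x_term m \<alpha> \<beta> \<eta> x) {(s, b). s @ b \<in> chains i k \<and> 2 \<le> length s \<and> b \<noteq> []}
    = (\<Sum>j\<in>{j. i < j \<and> j < k}. Dmap m \<alpha> \<beta> \<eta> j k (Dmap m \<alpha> \<beta> \<eta> i j x))"
proof -
  let ?J = "{j. i < j \<and> j < k}"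
  let ?comp = "\<lambda>(j, c, s). m (\<alpha> # map \<beta> c) (m (\<alpha> # map \<beta> s) (x # etas \<eta> s) # etas \<eta> c)"
  have "sum (x_term m \<alpha> \<beta> \<eta> x) {(s, b). s @ b \<in> chains i k \<and> 2 \<le> length s \<and> b \<noteq> []}
      = sum ?comp (SIGMA j:?J. chains j k \<times> chains i j)"
    by (rule composite_splittings_reindex)
  also have "\<dots> = (\<Sum>j\<in>?J. \<Sum>(c, s)\<in>chains j k \<times> chains i j.
      m (\<alpha> # map \<beta> c) (m (\<alpha> # map \<beta> s) (x # etas \<eta> s) # etas \<eta> c))"
    by (rule sum.Sigma[symmetric]) (auto simp: finite_chains)
  also have "\<dots> = (\<Sum>j\<in>?J. Dmap m \<alpha> \<beta> \<eta> j k (Dmap m \<alpha> \<beta> \<eta> i j x))"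
  proof (rule sum.cong[OF refl])
    fix j assume "j \<in> ?J"
    have "(\<Sum>(c, s)\<in>chains j k \<times> chains i j.
        m (\<alpha> # map \<beta> c) (m (\<alpha> # map \<beta> s) (x # etas \<eta> s) # etas \<eta> c))
      = (\<Sum>c\<in>chains j k. \<Sum>s\<in>chains i j.
        m (\<alpha> # map \<beta> c) (m (\<alpha> # map \<beta> s) (x # etas \<eta> s) # etas \<eta> c))"
      by (rule sum.cartesian_product[symmetric])
    also have "\<dots> = (\<Sum>c\<in>chains j k. m (\<alpha> # map \<beta> c) (Dmap m \<alpha> \<beta> \<eta> i j x # etas \<eta> c))"
      by (rule sum.cong[OF refl]) (rule polygon_of_D[OF _ x_in_CF])
    finally show "(\<Sum>(c, s)\<in>chains j k \<times> chains i j.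
        m (\<alpha> # map \<beta> c) (m (\<alpha> # map \<beta> s) (x # etas \<eta> s) # etas \<eta> c))
      = Dmap m \<alpha> \<beta> \<eta> j k (Dmap m \<alpha> \<beta> \<eta> i j x)"
      unfolding Dmap_def[of m \<alpha> \<beta> \<eta> j k] .
  qed
  finally show ?thesis .
qed

lemma x_terms_total:
  "sum (x_term m \<alpha> \<beta> \<eta> x) (x_splittings (chains i k))
    = m [\<alpha>, \<beta> k] [Dmap m \<alpha> \<beta> \<eta> i k x] + Dmap m \<alpha> \<beta> \<eta> i k (m [\<alpha>, \<beta> i] [x])
      + (\<Sum>j\<in>{j. i < j \<and> j < k}. Dmap m \<alpha> \<beta> \<eta> j k (Dmap m \<alpha> \<beta> \<eta> i j x))"
proof -
  let ?C = "chains i k" and ?h = "x_term m \<alpha> \<beta> \<eta> x"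
  let ?last = "(\<lambda>s. (s, [] :: 'i list)) ` ?C" and ?first = "(\<lambda>c. ([i], tl c)) ` ?C"
  let ?comp = "{(s, b). s @ b \<in> ?C \<and> 2 \<le> length s \<and> b \<noteq> []}"
  note parts = x_splittings_chains[of i k]
  have fin: "finite ?last" "finite ?first" "finite ?comp"
    using finite_x_splittings[OF finite_chains, of i k] unfolding parts by simp_all
  have "tl c \<noteq> []" if "c \<in> ?C" for c
    using chains_length_ge_2[OF i_less_k that] by (cases c) auto
  then have disjoint: "?last \<inter> ?first = {}" "(?last \<union> ?first) \<inter> ?comp = {}"
    by fastforce+
  have inj_first: "inj_on (\<lambda>c. ([i], tl c)) ?C"
  proof (rule inj_onI)
    fix c c' assume c: "c \<in> ?C" and c': "c' \<in> ?C" and eq: "([i], tl c) = ([i], tl c')"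
    have "c = i # tl c" by (rule chains_Cons_tl[OF c])
    also have "\<dots> = i # tl c'" using eq by simp
    also have "\<dots> = c'" by (rule chains_Cons_tl[OF c', symmetric])
    finally show "c = c'" .
  qed
  have "sum ?h (?last \<union> ?first \<union> ?comp) = sum ?h ?last + sum ?h ?first + sum ?h ?comp"
    using fin disjoint by (simp add: sum.union_disjoint)
  also have "sum ?h ?last = (\<Sum>s\<in>?C. ?h (s, []))"
    by (rule sum.reindex_cong[OF _ refl refl]) (simp add: inj_on_def)
  also have "sum ?h ?first = (\<Sum>c\<in>?C. ?h ([i], tl c))"
    by (rule sum.reindex_cong[OF inj_first refl refl])
  finally show ?thesis
    unfolding parts x_terms_last x_terms_first x_terms_composite .
qed

text \<open>Summing the \<open>A\<^sub>\<infinity>\<close> relations over all chains from \<open>i\<close> to \<open>k\<close> gives the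
  structure equation \<open>d(D\<^sup>i\<^sup><\<^sup>k) = \<Sum>\<^sub>j D\<^sup>j\<^sup><\<^sup>k \<circ> D\<^sup>i\<^sup><\<^sup>j\<close> (signs are irrelevant over \<open>\<bbbF>\<^sub>2\<close>).\<close>

lemma D_is_twisted_differential:
  "m [\<alpha>, \<beta> k] [Dmap m \<alpha> \<beta> \<eta> i k x] + Dmap m \<alpha> \<beta> \<eta> i k (m [\<alpha>, \<beta> i] [x])
    = (\<Sum>j\<in>{j. i < j \<and> j < k}. Dmap m \<alpha> \<beta> \<eta> j k (Dmap m \<alpha> \<beta> \<eta> i j x))"
    (is "?M1 + ?M2 = ?M3")
proof -
  let ?C = "chains i k"
  have "0 = (\<Sum>cs\<in>?C. ainf_sum m (\<alpha> # map \<beta> cs) (x # etas \<eta> cs))"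
  proof (rule sum.neutral[symmetric], rule ballI)
    fix cs assume "cs \<in> ?C"
    then have cs: "cs \<noteq> []" "sorted_wrt (<) cs" "hd cs = i" unfolding chains_def by auto
    show "ainf_sum m (\<alpha> # map \<beta> cs) (x # etas \<eta> cs) = 0"
      using adm_alpha cs composable_alpha_chain[OF cs(1,2)] x_in_CF by (intro ainf_relation) auto
  qed
  also have "\<dots> = (\<Sum>cs\<in>?C. sum (eta_term m \<alpha> \<beta> \<eta> x) (eta_splittings {cs})
      + sum (x_term m \<alpha> \<beta> \<eta> x) (x_splittings {cs}))"
    by (rule sum.cong[OF refl], rule ainf_sum_split) (auto simp: chains_def)
  also have "\<dots> = sum (eta_term m \<alpha> \<beta> \<eta> x) (eta_splittings ?C) + sum (x_term m \<alpha> \<beta> \<eta> x) (x_splittings ?C)"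
    by (simp only: sum.distrib sum_eta_splittings[OF finite_chains] sum_x_splittings[OF finite_chains])
  also have "\<dots> = ?M1 + ?M2 + ?M3"
    by (simp only: eta_terms_cancel x_terms_total add_0_left)
  finally have total: "?M1 + ?M2 + ?M3 = 0" by (rule sym)
  have "?M1 + ?M2 = ?M1 + ?M2 + (?M3 + ?M3)" by (simp only: add_self_eq_zero add_0_right)
  also have "\<dots> = (?M1 + ?M2 + ?M3) + ?M3" by (simp only: add.assoc)
  also have "\<dots> = ?M3" by (simp only: total add_0_left)
  finally show ?thesis .
qed

end

end

theorem proposition3:
  fixes gens :: "'o \<Rightarrow> 'o \<Rightarrow> 'g set"
    and adm :: "'o list \<Rightarrow> bool"
    and m :: "'o list \<Rightarrow> ('g \<Rightarrow> bit) list \<Rightarrow> ('g \<Rightarrow> bit)"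
    and \<beta> :: "'i::{order,finite} \<Rightarrow> 'o"
    and \<eta> :: "'i \<Rightarrow> 'i \<Rightarrow> ('g \<Rightarrow> bit)"
    and \<alpha> :: 'o
  assumes "polygon_maps gens adm m"
    and "filtered_circles gens adm m \<beta> \<eta>"
    and "\<forall>cs. cs \<noteq> [] \<longrightarrow> sorted_wrt (<) cs \<longrightarrow> adm (\<alpha> # map \<beta> cs)"
  shows "(\<forall>i x. x \<in> CF gens \<alpha> (\<beta> i) \<longrightarrow> m [\<alpha>, \<beta> i] [m [\<alpha>, \<beta> i] [x]] = 0)
    \<and> (\<forall>i j x. i < j \<longrightarrow> x \<in> CF gens \<alpha> (\<beta> i) \<longrightarrow> Dmap m \<alpha> \<beta> \<eta> i j x \<in> CF gens \<alpha> (\<beta> j))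
    \<and> (\<forall>i j x y. i < j \<longrightarrow> x \<in> CF gens \<alpha> (\<beta> i) \<longrightarrow> y \<in> CF gens \<alpha> (\<beta> i) \<longrightarrow>
         Dmap m \<alpha> \<beta> \<eta> i j (x + y) = Dmap m \<alpha> \<beta> \<eta> i j x + Dmap m \<alpha> \<beta> \<eta> i j y)
    \<and> (\<forall>i k x. i < k \<longrightarrow> x \<in> CF gens \<alpha> (\<beta> i) \<longrightarrow>
         m [\<alpha>, \<beta> k] [Dmap m \<alpha> \<beta> \<eta> i k x] + Dmap m \<alpha> \<beta> \<eta> i k (m [\<alpha>, \<beta> i] [x])
           = (\<Sum>j \<in> {j. i < j \<and> j < k}. Dmap m \<alpha> \<beta> \<eta> j k (Dmap m \<alpha> \<beta> \<eta> i j x)))"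
proof -
  interpret twisted_complex gens adm m \<beta> \<eta> \<alpha>
    using assms by (rule twisted_complex.intro)
  show ?thesis
    using differential_squared D_in_CF D_additive D_is_twisted_differential by blast
qed

end
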